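(* Every morphism in $\mathcal{D}$ is a morphism in $\mathscr{P}$. Thus there is a trace-preserving faithful strict monoidal functor $\mathcal{D}\to\mathscr{P}$ given by inclusion.
   Context: For $i\in\mathbb{N}$ let $V_i\cong\mathbb{C}^2$ with orthonormal basis $v_{i,0},v_{i,1}$, and for a finite ordered index list $A$ put $V_A=\bigotimes_{i\in A}V_i$. For $I\subseteq A$, $|I\rangle=\bigotimes_{i\in A}v_{i,\chi(i,I)}$ and $\langle I|=\bigotimes_{i\in A}v^*_{i,\chi(i,I)}$, where $\chi(i,I)=1$ if $i\in I$ and $0$ otherwise. Determinantal side: for a complex matrix $X$ with rows labeled by $R$ and columns by $S$, $\operatorname{sDet}(X)=\sum_{I\subseteq R,J\subseteq S}\det(X_{I,J})|I\rangle\langle J|$ ($X_{I,J}$ the submatrix on rows $I$, columns $J$; $\det$ of the $0\times0$ matrix is $1$, of non-square matrices $0$). $\mathcal{D}$ is the subcategory of $\mathrm{Vect}_\mathbb{C}$ with objects $V_A$ and morphisms generated by all $\operatorname{sDet}(X)$ under composition (contraction along shared labels) and tensor product, with the usual trace. Pfaffian side: for a skew-symmetric matrix $M$ with rows and columns labeled by the same ordered set $N$, $\operatorname{sPf}(M)=\sum_{I\subseteq N}\operatorname{Pf}(M_I)|I\rangle$ and $\operatorname{sPf}^\vee(M)=\sum_{I\subseteq N}\operatorname{Pf}(M_{\bar I})\langle I|$, where $M_I$ is the principal submatrix on labels $I$, $M_{\bar I}$ the principal submatrix with labels $I$ deleted, and $\operatorname{Pf}$ of the empty matrix is $1$. $\mathscr{P}$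 is the monoidal subcategory of $\mathrm{Vect}_\mathbb{C}$ with objects the $V_N$ and morphisms generated under composition (tensor contraction) and tensor product by all $\operatorname{sPf}(M)$ and $\operatorname{sPf}^\vee(M)$. *)

theory Defs
  imports Complex_Main "Jordan_Normal_Form.Determinant" "HOL-Combinatorics.Permutations"
begin

text \<open>A morphism V_A -> V_B (A = src, B = tgt, ordered lists of distinct labels) is
  represented by its matrix coefficients: coef I J = <I| f |J> for I subset of B,
  J subset of A (and 0 otherwise).\<close>

record tmor =
  tgt :: "nat list"
  src :: "nat list"
  coef :: "nat set \<Rightarrow> nat set \<Rightarrow> complex"

definition sublab :: "nat list \<Rightarrow> nat set \<Rightarrow> nat list" where
  "sublab xs I = filter (\<lambda>i. i \<in> I) xs"

definition detsub :: "(nat \<Rightarrow> nat \<Rightarrow> complex) \<Rightarrow> nat list \<Rightarrow> nat list \<Rightarrow> complex" where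
  "detsub X rs cs = (if length rs = length cs
     then det (mat (length rs) (length cs) (\<lambda>(i, j). X (rs ! i) (cs ! j))) else 0)"

definition pf_mat :: "nat \<Rightarrow> (nat \<Rightarrow> nat \<Rightarrow> complex) \<Rightarrow> complex" where
  "pf_mat n A = (if odd n then 0 else
     (\<Sum>p \<in> {p. p permutes {..<n}}. of_int (sign p) *
        (\<Prod>i<n div 2. A (p (2 * i)) (p (2 * i + 1))))
     / (2 ^ (n div 2) * fact (n div 2)))"

definition pfsub :: "(nat \<Rightarrow> nat \<Rightarrow> complex) \<Rightarrow> nat list \<Rightarrow> complex" where
  "pfsub M xs = pf_mat (length xs) (\<lambda>i j. M (xs ! i) (xs ! j))"

definition skew_on :: "nat list \<Rightarrow> (nat \<Rightarrow> nat \<Rightarrow> complex) \<Rightarrow> bool" where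
  "skew_on N M \<longleftrightarrow> (\<forall>i \<in> set N. \<forall>j \<in> set N. M i j = - M j i)"

definition sDet :: "nat list \<Rightarrow> nat list \<Rightarrow> (nat \<Rightarrow> nat \<Rightarrow> complex) \<Rightarrow> tmor" where
  "sDet R S X = \<lparr> tgt = R, src = S,
     coef = (\<lambda>I J. if I \<subseteq> set R \<and> J \<subseteq> set S
                    then detsub X (sublab R I) (sublab S J) else 0) \<rparr>"

definition sPf :: "nat list \<Rightarrow> (nat \<Rightarrow> nat \<Rightarrow> complex) \<Rightarrow> tmor" where
  "sPf N M = \<lparr> tgt = N, src = [],
     coef = (\<lambda>I J. if I \<subseteq> set N \<and> J = {} then pfsub M (sublab N I) else 0) \<rparr>"

definition sPfv :: "nat list \<Rightarrow> (nat \<Rightarrow> nat \<Rightarrow> complex) \<Rightarrow> tmor" where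
  "sPfv N M = \<lparr> tgt = [], src = N,
     coef = (\<lambda>I J. if I = {} \<and> J \<subseteq> set N then pfsub M (sublab N (- J)) else 0) \<rparr>"

definition idm :: "nat list \<Rightarrow> tmor" where
  "idm A = \<lparr> tgt = A, src = A, coef = (\<lambda>I J. if I \<subseteq> set A \<and> I = J then 1 else 0) \<rparr>"

definition comp :: "tmor \<Rightarrow> tmor \<Rightarrow> tmor" where
  "comp f g = \<lparr> tgt = tgt f, src = src g,
     coef = (\<lambda>I J. \<Sum>K \<in> Pow (set (src f)). coef f I K * coef g K J) \<rparr>"

definition tensor :: "tmor \<Rightarrow> tmor \<Rightarrow> tmor" where
  "tensor f g = \<lparr> tgt = tgt f @ tgt g, src = src f @ src g,
     coef = (\<lambda>I J. if I \<subseteq> set (tgt f @ tgt g) \<and> J \<subseteq> set (src f @ src g)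
        then coef f (I \<inter> set (tgt f)) (J \<inter> set (src f)) *
             coef g (I \<inter> set (tgt g)) (J \<inter> set (src g)) else 0) \<rparr>"

inductive_set Dmor :: "tmor set" where
  gen: "distinct R \<Longrightarrow> distinct S \<Longrightarrow> sDet R S X \<in> Dmor"
| ident: "distinct A \<Longrightarrow> idm A \<in> Dmor"
| compose: "f \<in> Dmor \<Longrightarrow> g \<in> Dmor \<Longrightarrow> src f = tgt g \<Longrightarrow> comp f g \<in> Dmor"
| tens: "f \<in> Dmor \<Longrightarrow> g \<in> Dmor \<Longrightarrow> set (tgt f) \<inter> set (tgt g) = {} \<Longrightarrow>
         set (src f) \<inter> set (src g) = {} \<Longrightarrow> tensor f g \<in> Dmor"

inductive_set Pmor :: "tmor set" where
  genPf: "distinct N \<Longrightarrow> skew_on N M \<Longrightarrow> sPf N M \<in> Pmor"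
| genPfv: "distinct N \<Longrightarrow> skew_on N M \<Longrightarrow> sPfv N M \<in> Pmor"
| ident: "distinct A \<Longrightarrow> idm A \<in> Pmor"
| compose: "f \<in> Pmor \<Longrightarrow> g \<in> Pmor \<Longrightarrow> src f = tgt g \<Longrightarrow> comp f g \<in> Pmor"
| tens: "f \<in> Pmor \<Longrightarrow> g \<in> Pmor \<Longrightarrow> set (tgt f) \<inter> set (tgt g) = {} \<Longrightarrow>
         set (src f) \<inter> set (src g) = {} \<Longrightarrow> tensor f g \<in> Pmor"

end

theory Submission
  imports Defs
begin

text \<open>
  Let \<open>R\<close> and \<open>S\<close> be disjoint and let \<open>S'\<close> be a fresh copy of \<open>S\<close>. The Pfaffian of a skew
  matrix \<open>[[0, A], [-A\<^sup>T, 0]]\<close> with square blocks is \<open>(-1)^(k(k-1)/2) det A\<close> and vanishes for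
  non-square blocks. Hence the state \<open>sPf(M\<^sub>s)\<close>, with \<open>M\<^sub>s\<close> carrying \<open>x X\<close> between \<open>R\<close> and \<open>S'\<close>,
  has the signed minors of \<open>X\<close> as coefficients, and the costate \<open>sPf\<^sup>\<or>(M\<^sub>c)\<close>, with \<open>M\<^sub>c\<close> pairing
  each label of \<open>S'\<close> with its original in \<open>S\<close> by \<open>c\<close>, identifies the labels of \<open>S'\<close> with those of
  \<open>S\<close>. Contracting \<open>sPf(M\<^sub>s) \<otimes> id\<^sub>S\<close> with \<open>id\<^sub>R \<otimes> sPf\<^sup>\<or>(M\<^sub>c)\<close> therefore gives \<open>sDet(X)\<close> up
  to signs and powers of \<open>x\<close> and \<open>c\<close>, which cancel for \<open>c\<^sup>n = (-1)^(n(n-1)/2)\<close> and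
  \<open>x = (-1)^(n+1) c\<close>. For overlapping \<open>R\<close> and \<open>S\<close>, \<open>sDet(X)\<close> factors through a fresh copy of \<open>R\<close>.
\<close>

section \<open>Pfaffians of antidiagonal block matrices\<close>

text \<open>\<open>interleave_sign k = (-1)^(k(k-1)/2)\<close>, the sign of the permutation \<open>interleave k\<close> below.\<close>

fun interleave_sign :: "nat \<Rightarrow> complex" where
  "interleave_sign 0 = 1"
| "interleave_sign (Suc k) = (-1) ^ k * interleave_sign k"

lemma interleave_sign_square: "interleave_sign k * interleave_sign k = 1"
proof (induction k)
  case (Suc k)
  have "interleave_sign (Suc k) * interleave_sign (Suc k)
      = ((-1) ^ k * (-1) ^ k) * (interleave_sign k * interleave_sign k)"
    by (simp add: algebra_simps)
  also have "(-1::complex) ^ k * (-1) ^ k = 1"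
    by (simp add: power_add[symmetric])
  finally show ?case using Suc by simp
qed simp

lemma interleave_sign_add:
  "interleave_sign (a + b) = interleave_sign a * interleave_sign b * (-1) ^ (a * b)"
proof (induction b)
  case (Suc b)
  have "interleave_sign (a + Suc b) = (-1) ^ (a + b) * interleave_sign (a + b)"
    by simp
  also have "\<dots> = interleave_sign a * interleave_sign b * ((-1) ^ b * (-1) ^ (a * b) * (-1) ^ a)"
    using Suc by (simp add: power_add algebra_simps)
  also have "(-1::complex) ^ b * (-1) ^ (a * b) * (-1) ^ a = (-1) ^ b * (-1) ^ (a * Suc b)"
    by (simp add: power_add algebra_simps)
  finally show ?case by (simp add: algebra_simps)
qed simp

lemma inj_on_endo_permutes:
  assumes "finite S" "inj_on f S" "f ` S \<subseteq> S" "\<And>x. x \<notin> S \<Longrightarrow> f x = x"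
  shows "f permutes S"
  using assms by (intro bij_imp_permutes) (auto simp: bij_betw_def endo_inj_surj)

text \<open>\<open>interleave k\<close> maps the pair \<open>(2i, 2i+1)\<close> of the Pfaffian expansion to \<open>(i, k+i)\<close>.\<close>

definition interleave :: "nat \<Rightarrow> nat \<Rightarrow> nat" where
  "interleave k j = (if j < 2 * k then (if even j then j div 2 else k + j div 2) else j)"

definition rotate_segment :: "nat \<Rightarrow> nat \<Rightarrow> nat \<Rightarrow> nat" where
  "rotate_segment k j x = (if k \<le> x \<and> x < k + j then x + 1 else if x = k + j then k else x)"

lemma interleave_permutes: "interleave k permutes {..<2 * k}"
proof (rule inj_on_endo_permutes)
  show "inj_on (interleave k) {..<2 * k}"
    unfolding inj_on_def interleave_def by auto presburger+
qed (auto simp: interleave_def)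

lemma rotate_segment_0: "rotate_segment k 0 = id"
  by (auto simp: rotate_segment_def fun_eq_iff)

lemma rotate_segment_Suc:
  "rotate_segment k (Suc j) = Transposition.transpose k (k + Suc j) \<circ> rotate_segment k j"
  by (auto simp: rotate_segment_def fun_eq_iff Transposition.transpose_def)

lemma permutation_rotate_segment: "permutation (rotate_segment k j)"
proof (induction j)
  case (Suc j)
  then show ?case
    unfolding rotate_segment_Suc by (rule permutation_compose[OF permutation_swap_id])
qed (simp add: rotate_segment_0)

lemma sign_rotate_segment: "sign (rotate_segment k j) = (-1) ^ j"
proof (induction j)
  case (Suc j)
  then show ?case
    unfolding rotate_segment_Suc
    by (subst sign_compose[OF permutation_swap_id permutation_rotate_segment]) (simp add: sign_swap_id)
qed (simp add: rotate_segment_0)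

lemma interleave_Suc: "interleave (Suc k) = rotate_segment k k \<circ> interleave k"
  unfolding interleave_def rotate_segment_def o_def by (rule ext) (auto; presburger)

lemma sign_interleave: "of_int (sign (interleave k)) = interleave_sign k"
proof (induction k)
  case 0
  have "interleave 0 = id" by (auto simp: interleave_def)
  then show ?case by simp
next
  case (Suc k)
  have "permutation (interleave k)"
    using interleave_permutes permutes_imp_permutation by blast
  then have "sign (interleave (Suc k)) = (-1) ^ k * sign (interleave k)"
    by (simp add: interleave_Suc sign_compose permutation_rotate_segment sign_rotate_segment)
  then show ?case using Suc by simp
qed

lemma interleave_even: "i < k \<Longrightarrow> interleave k (2 * i) = i"
  by (simp add: interleave_def)

lemma interleave_odd: "i < k \<Longrightarrow> interleave k (Suc (2 * i)) = k + i"
  by (simp add: interleave_def)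

definition antidiag_block :: "nat \<Rightarrow> (nat \<Rightarrow> nat \<Rightarrow> complex) \<Rightarrow> nat \<Rightarrow> nat \<Rightarrow> complex" where
  "antidiag_block p A i j =
     (if i < p \<and> p \<le> j then A i (j - p) else if p \<le> i \<and> j < p then - A j (i - p) else 0)"

lemma antidiag_block_skew: "antidiag_block p A j i = - antidiag_block p A i j"
  by (auto simp: antidiag_block_def)

definition paired_term :: "nat \<Rightarrow> (nat \<Rightarrow> nat \<Rightarrow> complex) \<Rightarrow> (nat \<Rightarrow> nat) \<Rightarrow> complex" where
  "paired_term k B t = of_int (sign t) * (\<Prod>i<k. B (t i) (t (k + i)))"

lemma pf_mat_cong:
  assumes "\<And>i j. i < n \<Longrightarrow> j < n \<Longrightarrow> B i j = B' i j"
  shows "pf_mat n B = pf_mat n B'"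
proof -
  have "(\<Prod>i<n div 2. B (s (2 * i)) (s (2 * i + 1))) = (\<Prod>i<n div 2. B' (s (2 * i)) (s (2 * i + 1)))"
    if s: "s permutes {..<n}" for s
  proof (rule prod.cong)
    fix i assume "i \<in> {..<n div 2}"
    then have "s (2 * i) < n" "s (2 * i + 1) < n"
      using permutes_in_image[OF s] by auto
    then show "B (s (2 * i)) (s (2 * i + 1)) = B' (s (2 * i)) (s (2 * i + 1))"
      using assms by blast
  qed simp
  then show ?thesis
    unfolding pf_mat_def by (intro arg_cong2[where f = "(/)"] if_cong sum.cong) auto
qed

lemma pf_mat_as_paired_terms:
  "pf_mat (2 * k) B
     = interleave_sign k * (\<Sum>t | t permutes {..<2 * k}. paired_term k B t) / (2 ^ k * fact k)"
proof -
  let ?T = "{t. t permutes {..<2 * k}}"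
  have "(\<Sum>s\<in>?T. of_int (sign s) * (\<Prod>i<k. B (s (2 * i)) (s (2 * i + 1))))
     = (\<Sum>t\<in>?T. of_int (sign (t \<circ> interleave k))
          * (\<Prod>i<k. B ((t \<circ> interleave k) (2 * i)) ((t \<circ> interleave k) (2 * i + 1))))"
    by (rule sum_permutations_compose_right[OF interleave_permutes])
  also have "\<dots> = (\<Sum>t\<in>?T. interleave_sign k * paired_term k B t)"
  proof (rule sum.cong[OF refl])
    fix t assume "t \<in> ?T"
    then have t: "permutation t" using permutes_imp_permutation by auto
    have "permutation (interleave k)"
      using interleave_permutes permutes_imp_permutation by blast
    then have "(of_int (sign (t \<circ> interleave k)) :: complex) = of_int (sign t) * interleave_sign k"
      by (simp add: sign_compose[OF t] sign_interleave[symmetric])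
    moreover have "(\<Prod>i<k. B ((t \<circ> interleave k) (2 * i)) ((t \<circ> interleave k) (2 * i + 1)))
        = (\<Prod>i<k. B (t i) (t (k + i)))"
      by (rule prod.cong) (auto simp: interleave_even interleave_odd)
    ultimately show "of_int (sign (t \<circ> interleave k))
          * (\<Prod>i<k. B ((t \<circ> interleave k) (2 * i)) ((t \<circ> interleave k) (2 * i + 1)))
        = interleave_sign k * paired_term k B t"
      by (simp add: paired_term_def)
  qed
  finally show ?thesis
    by (simp add: pf_mat_def sum_distrib_left)
qed

definition swap_pairs :: "nat \<Rightarrow> nat set \<Rightarrow> nat \<Rightarrow> nat" where
  "swap_pairs k E x =
     (if x < k \<and> x \<in> E then x + k else if k \<le> x \<and> x < 2 * k \<and> x - k \<in> E then x - k else x)"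

lemma swap_pairs_empty: "swap_pairs k {} = id"
  by (auto simp: swap_pairs_def fun_eq_iff)

lemma swap_pairs_insert:
  assumes "e < k" "e \<notin> E"
  shows "swap_pairs k (insert e E) = swap_pairs k E \<circ> Transposition.transpose e (e + k)"
proof
  fix x
  show "swap_pairs k (insert e E) x = (swap_pairs k E \<circ> Transposition.transpose e (e + k)) x"
  proof (cases "x = e \<or> x = e + k")
    case True
    then show ?thesis using assms by (auto simp: swap_pairs_def)
  next
    case False
    then have "Transposition.transpose e (e + k) x = x" by simp
    moreover have "swap_pairs k (insert e E) x = swap_pairs k E x"
      using False unfolding swap_pairs_def by auto
    ultimately show ?thesis by simp
  qed
qed

lemma swap_pairs_involution: "swap_pairs k E (swap_pairs k E x) = x"
  unfolding swap_pairs_def by (simp split: if_split; linarith)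

lemma swap_pairs_permutes: "swap_pairs k E permutes {..<2 * k}"
proof (rule inj_on_endo_permutes)
  show "inj_on (swap_pairs k E) {..<2 * k}"
    by (metis inj_onI swap_pairs_involution)
qed (auto simp: swap_pairs_def)

lemma swap_pairs_low: "i < k \<Longrightarrow> swap_pairs k E i = (if i \<in> E then i + k else i)"
  by (simp add: swap_pairs_def)

lemma swap_pairs_high: "i < k \<Longrightarrow> swap_pairs k E (k + i) = (if i \<in> E then i else k + i)"
  by (simp add: swap_pairs_def)

lemma paired_term_transpose:
  assumes skew: "\<And>a b. B b a = - B a b" and t: "permutation t" and e: "e < k"
  shows "paired_term k B (t \<circ> Transposition.transpose e (e + k)) = paired_term k B t"
proof -
  let ?s = "Transposition.transpose e (e + k)"
  let ?f = "\<lambda>u i. B (u i) (u (k + i))"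
  have ein: "e \<in> {..<k}" using e by simp
  have "prod (?f (t \<circ> ?s)) {..<k} = ?f (t \<circ> ?s) e * prod (?f (t \<circ> ?s)) ({..<k} - {e})"
    by (rule prod.remove[OF _ ein]) simp
  also have "prod (?f (t \<circ> ?s)) ({..<k} - {e}) = prod (?f t) ({..<k} - {e})"
    using e by (intro prod.cong) (auto simp: Transposition.transpose_def)
  also have "?f (t \<circ> ?s) e = - ?f t e"
    using skew[of "t e" "t (e + k)"] by (simp add: add.commute)
  finally have "prod (?f (t \<circ> ?s)) {..<k} = - prod (?f t) {..<k}"
    using prod.remove[OF _ ein, of "?f t"] by simp
  moreover have "sign (t \<circ> ?s) = - sign t"
    using e by (simp add: sign_compose[OF t permutation_swap_id] sign_swap_id)
  ultimately show ?thesis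
    unfolding paired_term_def by simp
qed

lemma paired_term_swap_pairs:
  assumes skew: "\<And>a b. B b a = - B a b" and E: "E \<subseteq> {..<k}" and t: "permutation t"
  shows "paired_term k B (t \<circ> swap_pairs k E) = paired_term k B t"
  using finite_subset[OF E finite_lessThan] E t
proof (induction E arbitrary: t rule: finite_induct)
  case empty
  then show ?case by (simp add: swap_pairs_empty)
next
  case (insert e E)
  then have e: "e < k" and E: "E \<subseteq> {..<k}" by auto
  have p: "permutation (t \<circ> swap_pairs k E)"
    using insert.prems(2) permutes_imp_permutation[OF _ swap_pairs_permutes]
    by (intro permutation_compose) auto
  have "paired_term k B (t \<circ> swap_pairs k (insert e E))
      = paired_term k B (t \<circ> swap_pairs k E \<circ> Transposition.transpose e (e + k))"
    using swap_pairs_insert[OF e insert.hyps(2)] by (simp add: o_assoc)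
  also have "\<dots> = paired_term k B (t \<circ> swap_pairs k E)"
    by (rule paired_term_transpose[OF skew p e])
  also have "\<dots> = paired_term k B t"
    by (rule insert.IH[OF E insert.prems(2)])
  finally show ?case .
qed

text \<open>For an antidiagonal block matrix only crossing permutations give nonzero paired terms. Each is a
  split permutation followed by swaps of some pairs, which leave paired terms of a skew matrix unchanged,
  and a split permutation is a pair of permutations of the two halves. This accounts for the factor
  \<open>2^k k!\<close> in front of \<open>det A\<close>.\<close>

definition perms :: "nat \<Rightarrow> (nat \<Rightarrow> nat) set" where
  "perms k = {a. a permutes {..<k}}"

definition split_perms :: "nat \<Rightarrow> (nat \<Rightarrow> nat) set" where
  "split_perms k = {t. t permutes {..<2 * k} \<and> (\<forall>i<k. t i < k)}"

definition crossing_perms :: "nat \<Rightarrow> (nat \<Rightarrow> nat) set" where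
  "crossing_perms k = {t. t permutes {..<2 * k} \<and> (\<forall>i<k. (t i < k) \<noteq> (t (k + i) < k))}"

lemma split_perms_high:
  assumes t: "t \<in> split_perms k" and j: "k \<le> j" "j < 2 * k"
  shows "k \<le> t j"
proof (rule ccontr)
  assume "\<not> k \<le> t j"
  have tp: "t permutes {..<2 * k}" and low: "\<forall>i<k. t i < k"
    using t by (auto simp: split_perms_def)
  have inj: "inj t" using permutes_inj[OF tp] .
  have "t ` {..<k} = {..<k}"
    using low inj by (intro endo_inj_surj) (auto simp: inj_on_def inj_def)
  then obtain i where "i < k" "t j = t i"
    using \<open>\<not> k \<le> t j\<close> by (metis imageE lessThan_iff not_le)
  then show False using inj j by (metis injD not_le)
qed

lemma split_perms_swap_pairs_upper:
  assumes E: "E \<subseteq> {..<k}" and t: "t \<in> split_perms k"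
  shows "{i. i < k \<and> k \<le> t (swap_pairs k E i)} = E"
  using split_perms_high[OF t] t E by (auto simp: swap_pairs_low split_perms_def split: if_split_asm)

lemma split_perms_swap_pairs_crossing:
  assumes t: "t \<in> split_perms k"
  shows "t \<circ> swap_pairs k E \<in> crossing_perms k"
proof -
  have tp: "t permutes {..<2 * k}" and low: "\<forall>i<k. t i < k"
    using t by (auto simp: split_perms_def)
  have "((t \<circ> swap_pairs k E) i < k) \<noteq> ((t \<circ> swap_pairs k E) (k + i) < k)" if i: "i < k" for i
    using i low split_perms_high[OF t, of "k + i"] split_perms_high[OF t, of "i + k"]
    by (simp add: swap_pairs_low swap_pairs_high)
  then show ?thesis
    using permutes_compose[OF swap_pairs_permutes tp] by (simp add: crossing_perms_def)
qed

lemma crossing_perms_swap_pairs_split: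
  assumes t: "t \<in> crossing_perms k"
  shows "t \<circ> swap_pairs k {i. i < k \<and> k \<le> t i} \<in> split_perms k"
proof -
  let ?E = "{i. i < k \<and> k \<le> t i}"
  have tp: "t permutes {..<2 * k}" and cr: "\<forall>i<k. (t i < k) \<noteq> (t (k + i) < k)"
    using t by (auto simp: crossing_perms_def)
  have "(t \<circ> swap_pairs k ?E) i < k" if i: "i < k" for i
  proof (cases "k \<le> t i")
    case True
    then have "t (k + i) < k" using cr i by auto
    then show ?thesis using True i by (simp add: swap_pairs_low add.commute)
  next
    case False
    then show ?thesis using i by (simp add: swap_pairs_low)
  qed
  then show ?thesis
    using permutes_compose[OF swap_pairs_permutes tp] by (simp add: split_perms_def)
qed

lemma bij_betw_swap_pairs:
  "bij_betw (\<lambda>(E, t). t \<circ> swap_pairs k E) (Pow {..<k} \<times> split_perms k) (crossing_perms k)"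
  by (rule bij_betw_byWitness[where f' = "\<lambda>t. ({i. i < k \<and> k \<le> t i}, t \<circ> swap_pairs k {i. i < k \<and> k \<le> t i})"])
    (auto simp: split_perms_swap_pairs_upper swap_pairs_involution fun_eq_iff
      split_perms_swap_pairs_crossing crossing_perms_swap_pairs_split)

definition block_perm :: "nat \<Rightarrow> (nat \<Rightarrow> nat) \<Rightarrow> (nat \<Rightarrow> nat) \<Rightarrow> nat \<Rightarrow> nat" where
  "block_perm k a b x = (if x < k then a x else if x < 2 * k then k + b (x - k) else x)"

lemma block_perm_eq_map_permutation:
  assumes a: "a permutes {..<k}"
  shows "block_perm k a b = a \<circ> map_permutation {..<k} (\<lambda>x. x + k) b"
proof
  fix y
  show "block_perm k a b y = (a \<circ> map_permutation {..<k} (\<lambda>x. x + k) b) y"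
  proof (cases "k \<le> y \<and> y < 2 * k")
    case True
    then have "y \<in> (\<lambda>x. x + k) ` {..<k}" by (auto intro!: image_eqI[of _ _ "y - k"])
    moreover have "inv_into {..<k} (\<lambda>x. x + k) y = y - k"
      using True by (intro inv_into_f_eq) (auto simp: inj_on_def)
    ultimately show ?thesis
      using True permutes_not_in[OF a]
      by (simp add: block_perm_def map_permutation_def restrict_id_def add.commute)
  next
    case False
    then have "y \<notin> (\<lambda>x. x + k) ` {..<k}" by auto
    then show ?thesis
      using False permutes_not_in[OF a]
      by (auto simp: block_perm_def map_permutation_def restrict_id_def)
  qed
qed

lemma block_perm_permutes_sign:
  assumes a: "a permutes {..<k}" and b: "b permutes {..<k}"
  shows "block_perm k a b permutes {..<2 * k}" and "sign (block_perm k a b) = sign a * sign b"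
proof -
  let ?b = "map_permutation {..<k} (\<lambda>x. x + k) b"
  have "bij_betw (\<lambda>x. x + k) {..<k} ((\<lambda>x. x + k) ` {..<k})"
    by (auto simp: bij_betw_def inj_on_def)
  then have "?b permutes (\<lambda>x. x + k) ` {..<k}"
    by (rule map_permutation_permutes[OF _ b])
  then have b': "?b permutes {..<2 * k}"
    by (rule permutes_subset) auto
  have a': "a permutes {..<2 * k}"
    by (rule permutes_subset[OF a]) auto
  show "block_perm k a b permutes {..<2 * k}"
    unfolding block_perm_eq_map_permutation[OF a] by (rule permutes_compose[OF b' a'])
  have "sign ?b = sign b"
    by (rule sign_map_permutation[OF _ b]) (auto simp: inj_on_def)
  then show "sign (block_perm k a b) = sign a * sign b"
    unfolding block_perm_eq_map_permutation[OF a]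
    by (simp add: sign_compose[OF permutes_imp_permutation[OF _ a'] permutes_imp_permutation[OF _ b']])
qed

definition low_part :: "nat \<Rightarrow> (nat \<Rightarrow> nat) \<Rightarrow> nat \<Rightarrow> nat" where
  "low_part k t x = (if x < k then t x else x)"

definition high_part :: "nat \<Rightarrow> (nat \<Rightarrow> nat) \<Rightarrow> nat \<Rightarrow> nat" where
  "high_part k t x = (if x < k then t (k + x) - k else x)"

lemma split_perms_parts_permute:
  assumes t: "t \<in> split_perms k"
  shows "low_part k t permutes {..<k}" and "high_part k t permutes {..<k}"
proof -
  have tp: "t permutes {..<2 * k}" and low: "\<forall>i<k. t i < k"
    using t by (auto simp: split_perms_def)
  have inj: "inj t" by (rule permutes_inj[OF tp])
  show "low_part k t permutes {..<k}"
    using low inj by (intro inj_on_endo_permutes) (auto simp: low_part_def inj_on_def inj_def)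
  have high: "k \<le> t (k + x)" "t (k + x) < 2 * k" if "x < k" for x
    using that split_perms_high[OF t] permutes_in_image[OF tp, of "k + x"] by auto
  show "high_part k t permutes {..<k}"
  proof (rule inj_on_endo_permutes)
    show "inj_on (high_part k t) {..<k}"
    proof (rule inj_onI)
      fix x y assume "x \<in> {..<k}" "y \<in> {..<k}" "high_part k t x = high_part k t y"
      then have "t (k + x) = t (k + y)"
        using high(1)[of x] high(1)[of y] by (simp add: high_part_def)
      then show "x = y" using injD[OF inj] by fastforce
    qed
    show "high_part k t ` {..<k} \<subseteq> {..<k}"
    proof clarify
      fix x assume "x < k"
      then show "high_part k t x < k" using high[OF \<open>x < k\<close>] by (simp add: high_part_def)
    qed
  qed (auto simp: high_part_def)
qed

lemma parts_block_perm:
  assumes a: "a permutes {..<k}" and b: "b permutes {..<k}"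
  shows "low_part k (block_perm k a b) = a" and "high_part k (block_perm k a b) = b"
  using permutes_not_in[OF a] permutes_not_in[OF b]
  by (auto simp: low_part_def high_part_def block_perm_def fun_eq_iff)

lemma block_perm_parts:
  assumes t: "t \<in> split_perms k"
  shows "block_perm k (low_part k t) (high_part k t) = t"
proof
  fix x
  have tp: "t permutes {..<2 * k}" using t by (simp add: split_perms_def)
  consider "x < k" | "k \<le> x" "x < 2 * k" | "\<not> x < 2 * k" by linarith
  then show "block_perm k (low_part k t) (high_part k t) x = t x"
  proof cases
    case 2
    then have "high_part k t (x - k) = t x - k"
      by (simp add: high_part_def)
    then show ?thesis
      using 2 split_perms_high[OF t, of x] by (simp add: block_perm_def)
  qed (simp_all add: block_perm_def low_part_def permutes_not_in[OF tp])
qed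

lemma block_perm_in_split_perms:
  assumes a: "a permutes {..<k}" and b: "b permutes {..<k}"
  shows "block_perm k a b \<in> split_perms k"
proof -
  have "block_perm k a b i < k" if "i < k" for i
    using that permutes_in_image[OF a, of i] by (simp add: block_perm_def)
  then show ?thesis
    using block_perm_permutes_sign(1)[OF a b] by (simp add: split_perms_def)
qed

lemma bij_betw_block_perm:
  "bij_betw (\<lambda>(a, b). block_perm k a b) (perms k \<times> perms k) (split_perms k)"
  by (rule bij_betw_byWitness[where f' = "\<lambda>t. (low_part k t, high_part k t)"])
    (auto simp: perms_def parts_block_perm block_perm_parts block_perm_in_split_perms
      split_perms_parts_permute)

lemma paired_term_antidiag_block_vanishes:
  assumes "i < k" and "(t i < p) = (t (k + i) < p)"
  shows "paired_term k (antidiag_block p A) t = 0"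
proof -
  have "antidiag_block p A (t i) (t (k + i)) = 0"
    using assms(2) by (auto simp: antidiag_block_def)
  then show ?thesis
    using assms(1) by (auto simp: paired_term_def intro: prod_zero)
qed

lemma paired_term_block_perm:
  assumes a: "a permutes {..<k}" and b: "b permutes {..<k}"
  shows "paired_term k (antidiag_block k A) (block_perm k a b)
    = of_int (sign a) * of_int (sign b) * (\<Prod>i<k. A (a i) (b i))"
proof -
  have "(\<Prod>i<k. antidiag_block k A (block_perm k a b i) (block_perm k a b (k + i)))
      = (\<Prod>i<k. A (a i) (b i))"
    using permutes_in_image[OF a] by (intro prod.cong) (auto simp: block_perm_def antidiag_block_def)
  then show ?thesis
    unfolding paired_term_def block_perm_permutes_sign(2)[OF a b] by simp
qed

lemma det_permute_rows_sum:
  assumes a: "a permutes {..<k}"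
  shows "(\<Sum>b\<in>perms k. of_int (sign b) * (\<Prod>i<k. A (a i) (b i)))
    = of_int (sign a) * det (mat k k (\<lambda>(i, j). A i j))"
proof -
  let ?M = "mat k k (\<lambda>(i, j). A i j)"
  have "(\<Prod>i<k. mat k k (\<lambda>(i, j). ?M $$ (a i, j)) $$ (i, b i)) = (\<Prod>i<k. A (a i) (b i))"
    if b: "b permutes {..<k}" for b
    using permutes_in_image[OF a] permutes_in_image[OF b] by (intro prod.cong) auto
  then have "det (mat k k (\<lambda>(i, j). ?M $$ (a i, j)))
      = (\<Sum>b\<in>perms k. of_int (sign b) * (\<Prod>i<k. A (a i) (b i)))"
    unfolding det_def perms_def by (simp add: atLeast0LessThan)
  moreover have "det (mat k k (\<lambda>(i, j). ?M $$ (a i, j))) = of_int (sign a) * det ?M"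
    using a by (intro det_permute_rows) (auto simp: atLeast0LessThan)
  ultimately show ?thesis by simp
qed

lemma sum_crossing_perms_paired_term:
  assumes skew: "\<And>a b. B b a = - B a b"
  shows "(\<Sum>t\<in>crossing_perms k. paired_term k B t) = 2 ^ k * (\<Sum>t\<in>split_perms k. paired_term k B t)"
proof -
  have "(\<Sum>t\<in>crossing_perms k. paired_term k B t)
      = (\<Sum>(E, t)\<in>Pow {..<k} \<times> split_perms k. paired_term k B (t \<circ> swap_pairs k E))"
    by (subst sum.reindex_bij_betw[OF bij_betw_swap_pairs, symmetric]) (simp add: case_prod_unfold)
  also have "\<dots> = (\<Sum>(E, t)\<in>Pow {..<k} \<times> split_perms k. paired_term k B t)"
  proof -
    have "paired_term k B (t \<circ> swap_pairs k E) = paired_term k B t"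
      if "E \<subseteq> {..<k}" "t \<in> split_perms k" for E t
      using that permutes_imp_permutation[of "{..<2 * k}" t]
      by (intro paired_term_swap_pairs[OF skew]) (auto simp: split_perms_def)
    then show ?thesis by (intro sum.cong) auto
  qed
  also have "\<dots> = (\<Sum>E\<in>Pow {..<k}. \<Sum>t\<in>split_perms k. paired_term k B t)"
    by (rule sum.cartesian_product[symmetric])
  also have "\<dots> = 2 ^ k * (\<Sum>t\<in>split_perms k. paired_term k B t)"
    by (simp add: card_Pow)
  finally show ?thesis .
qed

lemma sum_split_perms_antidiag_block:
  "(\<Sum>t\<in>split_perms k. paired_term k (antidiag_block k A) t) = fact k * det (mat k k (\<lambda>(i, j). A i j))"
proof -
  let ?D = "det (mat k k (\<lambda>(i, j). A i j))"
  have "(\<Sum>t\<in>split_perms k. paired_term k (antidiag_block k A) t)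
      = (\<Sum>(a, b)\<in>perms k \<times> perms k. paired_term k (antidiag_block k A) (block_perm k a b))"
    by (subst sum.reindex_bij_betw[OF bij_betw_block_perm, symmetric]) (simp add: case_prod_unfold)
  also have "\<dots> = (\<Sum>a\<in>perms k. \<Sum>b\<in>perms k. paired_term k (antidiag_block k A) (block_perm k a b))"
    by (rule sum.cartesian_product[symmetric])
  also have "\<dots> = (\<Sum>a\<in>perms k. ?D)"
  proof (rule sum.cong[OF refl])
    fix a assume "a \<in> perms k"
    then have a: "a permutes {..<k}" by (simp add: perms_def)
    have "(\<Sum>b\<in>perms k. paired_term k (antidiag_block k A) (block_perm k a b))
        = of_int (sign a) * (\<Sum>b\<in>perms k. of_int (sign b) * (\<Prod>i<k. A (a i) (b i)))"
      unfolding sum_distrib_left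
      by (intro sum.cong refl) (simp add: perms_def paired_term_block_perm[OF a] mult.assoc)
    also have "\<dots> = (of_int (sign a) * of_int (sign a)) * ?D"
      by (simp add: det_permute_rows_sum[OF a])
    also have "(of_int (sign a) * of_int (sign a) :: complex) = 1"
      by (simp flip: of_int_mult)
    finally show "(\<Sum>b\<in>perms k. paired_term k (antidiag_block k A) (block_perm k a b)) = ?D"
      by simp
  qed
  also have "\<dots> = fact k * ?D"
    by (simp add: perms_def card_permutations)
  finally show ?thesis .
qed

lemma sum_paired_term_antidiag_block_square:
  "(\<Sum>t | t permutes {..<2 * k}. paired_term k (antidiag_block k A) t)
    = 2 ^ k * fact k * det (mat k k (\<lambda>(i, j). A i j))"
proof -
  have "(\<Sum>t | t permutes {..<2 * k}. paired_term k (antidiag_block k A) t)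
      = (\<Sum>t\<in>crossing_perms k. paired_term k (antidiag_block k A) t)"
  proof (rule sum.mono_neutral_right)
    show "\<forall>t\<in>{t. t permutes {..<2 * k}} - crossing_perms k. paired_term k (antidiag_block k A) t = 0"
    proof
      fix t assume "t \<in> {t. t permutes {..<2 * k}} - crossing_perms k"
      then obtain i where "i < k" "(t i < k) = (t (k + i) < k)"
        by (auto simp: crossing_perms_def)
      then show "paired_term k (antidiag_block k A) t = 0"
        by (rule paired_term_antidiag_block_vanishes)
    qed
  qed (auto simp: finite_permutations crossing_perms_def)
  then show ?thesis
    by (simp add: sum_crossing_perms_paired_term[OF antidiag_block_skew]
        sum_split_perms_antidiag_block mult.assoc)
qed

text \<open>A nonzero term needs exactly one member of each of the \<open>k\<close> pairs below \<open>p\<close>;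
  as \<open>t\<close> is bijective, exactly \<open>p\<close> arguments are mapped below \<open>p\<close>.\<close>

lemma crossing_threshold_eq:
  fixes t :: "nat \<Rightarrow> nat"
  assumes t: "t permutes {..<2 * k}" and p: "p \<le> 2 * k"
    and cr: "\<forall>i<k. (t i < p) \<noteq> (t (k + i) < p)"
  shows "p = k"
proof -
  let ?S = "{j. j < 2 * k \<and> t j < p}"
  let ?L = "{i. i < k \<and> t i < p}" and ?H = "{i. i < k \<and> t (k + i) < p}"
  have "t ` ?S = {..<p}"
  proof
    show "{..<p} \<subseteq> t ` ?S"
    proof
      fix y assume y: "y \<in> {..<p}"
      then have "y \<in> t ` {..<2 * k}" using permutes_image[OF t] p by auto
      then show "y \<in> t ` ?S" using y by auto
    qed
  qed auto
  then have "card ?S = p"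
    using card_image[OF permutes_inj_on[OF t], of ?S] by simp
  moreover have "?S = ?L \<union> (+) k ` ?H"
  proof
    show "?S \<subseteq> ?L \<union> (+) k ` ?H"
    proof
      fix j assume j: "j \<in> ?S"
      show "j \<in> ?L \<union> (+) k ` ?H"
      proof (cases "j < k")
        case False
        then have "j = k + (j - k)" "j - k \<in> ?H" using j by auto
        then show ?thesis by blast
      qed (use j in simp)
    qed
    show "?L \<union> (+) k ` ?H \<subseteq> ?S"
      by auto
  qed
  moreover have "card (?L \<union> (+) k ` ?H) = card ?L + card ?H"
    by (subst card_Un_disjoint) (auto simp: card_image)
  moreover have "card ?L + card ?H = card (?L \<union> ?H)"
    using cr by (subst card_Un_disjoint) auto
  moreover have "?L \<union> ?H = {..<k}"
    using cr by auto
  ultimately show ?thesis by simp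
qed

lemma sum_paired_term_antidiag_block_nonsquare:
  assumes "p \<noteq> k" "p \<le> 2 * k"
  shows "(\<Sum>t | t permutes {..<2 * k}. paired_term k (antidiag_block p A) t) = 0"
proof (rule sum.neutral, clarify)
  fix t assume t: "t permutes {..<2 * k}"
  then obtain i where "i < k" "(t i < p) = (t (k + i) < p)"
    using crossing_threshold_eq[OF t assms(2)] assms(1) by blast
  then show "paired_term k (antidiag_block p A) t = 0"
    by (rule paired_term_antidiag_block_vanishes)
qed

lemma pf_mat_antidiag_block:
  "pf_mat (p + q) (antidiag_block p A)
    = (if p = q then interleave_sign p * det (mat p p (\<lambda>(i, j). A i j)) else 0)"
proof (cases "even (p + q)")
  case True
  define k where "k = (p + q) div 2"
  have n: "p + q = 2 * k" using True by (simp add: k_def)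
  show ?thesis
  proof (cases "p = q")
    case True
    then have "pf_mat (p + q) (antidiag_block p A) = pf_mat (2 * p) (antidiag_block p A)"
      by (simp add: mult_2)
    then show ?thesis
      using True by (simp add: pf_mat_as_paired_terms sum_paired_term_antidiag_block_square)
  next
    case False
    then have "p \<noteq> k" "p \<le> 2 * k" using n by auto
    then show ?thesis
      using False n by (simp add: pf_mat_as_paired_terms sum_paired_term_antidiag_block_nonsquare)
  qed
next
  case False
  then show ?thesis by (auto simp: pf_mat_def)
qed

lemma pfsub_append_block:
  assumes "\<forall>a\<in>set xs. \<forall>b\<in>set xs. M a b = 0"
    and "\<forall>a\<in>set ys. \<forall>b\<in>set ys. M a b = 0"
    and "\<forall>a\<in>set xs. \<forall>b\<in>set ys. M b a = - M a b"
  shows "pfsub M (xs @ ys) = (if length xs = length ys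
    then interleave_sign (length xs) * det (mat (length xs) (length xs) (\<lambda>(i, j). M (xs ! i) (ys ! j)))
    else 0)"
proof -
  have "pfsub M (xs @ ys) = pf_mat (length xs + length ys) (antidiag_block (length xs) (\<lambda>i j. M (xs ! i) (ys ! j)))"
    unfolding pfsub_def length_append
    by (rule pf_mat_cong) (use assms in \<open>auto simp: nth_append antidiag_block_def\<close>)
  then show ?thesis
    by (simp add: pf_mat_antidiag_block)
qed

section \<open>Sub-lists of labels and matching determinants\<close>

lemma sublab_append: "sublab (xs @ ys) I = sublab xs I @ sublab ys I"
  by (simp add: sublab_def)

lemma sublab_map: "sublab (map h xs) K = map h (sublab xs {x. h x \<in> K})"
  by (simp add: sublab_def filter_map o_def)

lemma set_sublab: "set (sublab xs I) = set xs \<inter> I"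
  by (auto simp: sublab_def)

lemma distinct_sublab: "distinct xs \<Longrightarrow> distinct (sublab xs I)"
  by (simp add: sublab_def)

lemma sublab_cong: "I \<inter> set xs = J \<inter> set xs \<Longrightarrow> sublab xs I = sublab xs J"
  unfolding sublab_def by (rule filter_cong) auto

lemma length_sublab_Compl: "length (sublab xs (- J)) = length xs - length (sublab xs J)"
  using sum_length_filter_compl[of "\<lambda>i. i \<in> J" xs] by (simp add: sublab_def)

lemma det_zero_row:
  assumes i: "i < n" and zero: "\<forall>j<n. f (i, j) = 0"
  shows "det (mat n n f) = (0 :: 'a :: comm_ring_1)"
proof -
  have "(\<Prod>i = 0..<n. mat n n f $$ (i, s i)) = 0" if s: "s permutes {0..<n}" for s
    using i zero permutes_in_image[OF s, of i] by (intro prod_zero bexI[of _ i]) auto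
  then show ?thesis
    unfolding det_def by simp
qed

text \<open>The matrix is \<open>c\<close> times the identity if the sub-lists coincide and has a zero row otherwise.\<close>

lemma det_sublab_match:
  assumes L: "distinct L" and l1: "length (sublab L K1) = n" and l2: "length (sublab L K2) = n"
  shows "det (mat n n (\<lambda>(i, j). if sublab L K1 ! i = sublab L K2 ! j then c else 0))
    = (if K1 \<inter> set L = K2 \<inter> set L then c ^ n else (0 :: 'a :: comm_ring_1))"
proof (cases "K1 \<inter> set L = K2 \<inter> set L")
  case True
  then have eq: "sublab L K1 = sublab L K2" by (rule sublab_cong)
  have d: "distinct (sublab L K1)" by (rule distinct_sublab[OF L])
  have "mat n n (\<lambda>(i, j). if sublab L K1 ! i = sublab L K2 ! j then c else 0) = c \<cdot>\<^sub>m 1\<^sub>m n"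
    using nth_eq_iff_index_eq[OF d] l1 eq by (intro eq_matI) auto
  then show ?thesis using True by simp
next
  case False
  have "card (set (sublab L K1)) = n" "card (set (sublab L K2)) = n"
    using distinct_card[OF distinct_sublab[OF L]] l1 l2 by auto
  moreover have "set (sublab L K1) \<noteq> set (sublab L K2)"
    using False by (auto simp: set_sublab)
  ultimately have "\<not> set (sublab L K1) \<subseteq> set (sublab L K2)"
    by (metis card_subset_eq List.finite_set)
  then obtain x where "x \<in> set (sublab L K1)" and notin: "x \<notin> set (sublab L K2)"
    by blast
  then obtain i where i: "i < n" and "sublab L K1 ! i = x"
    using l1 by (auto simp: in_set_conv_nth)
  then have notin: "sublab L K1 ! i \<notin> set (sublab L K2)"
    using notin by simp
  have "\<forall>j<n. (\<lambda>(i, j). if sublab L K1 ! i = sublab L K2 ! j then c else 0) (i, j) = 0"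
    using notin l2 nth_mem by fastforce
  then have "det (mat n n (\<lambda>(i, j). if sublab L K1 ! i = sublab L K2 ! j then c else 0)) = 0"
    by (rule det_zero_row[OF i])
  then show ?thesis using False by simp
qed

section \<open>\<open>sDet\<close> of disjoint label lists as a Pfaffian diagram\<close>

locale pfaffian_factorization =
  fixes R S :: "nat list" and X :: "nat \<Rightarrow> nat \<Rightarrow> complex" and m :: nat and x c :: complex
  assumes distinct_R: "distinct R" and distinct_S: "distinct S" and R_S_disjoint: "set R \<inter> set S = {}"
    and R_below: "\<forall>a\<in>set R. a < m" and S_below: "\<forall>a\<in>set S. a < m"
    and scalars_cancel: "\<forall>p\<le>length S.
      interleave_sign (length S - p) * c ^ (length S - p) * (interleave_sign p * x ^ p) = 1"
begin

definition shift :: "nat \<Rightarrow> nat" where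
  "shift a = a + m"

definition S' :: "nat list" where
  "S' = map shift S"

definition Mstate :: "nat \<Rightarrow> nat \<Rightarrow> complex" where
  "Mstate u v = (if u \<in> set R \<and> v \<in> set S' then x * X u (v - m)
     else if v \<in> set R \<and> u \<in> set S' then - (x * X v (u - m)) else 0)"

definition Mcap :: "nat \<Rightarrow> nat \<Rightarrow> complex" where
  "Mcap u v = (if u \<in> set S' \<and> v \<in> set S then (if u = shift v then c else 0)
     else if v \<in> set S' \<and> u \<in> set S then (if v = shift u then - c else 0) else 0)"

definition diagram :: tmor where
  "diagram = comp (tensor (idm R) (sPfv (S' @ S) Mcap)) (tensor (sPf (R @ S') Mstate) (idm S))"

lemma inj_shift: "inj shift"
  by (simp add: shift_def inj_def)

lemma shift_notin_R: "shift y \<notin> set R"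
  using R_below by (auto simp: shift_def)

lemma shift_notin_S: "shift y \<notin> set S"
  using S_below by (auto simp: shift_def)

lemma set_S': "set S' = shift ` set S"
  by (simp add: S'_def)

lemma S'_R_disjoint: "set S' \<inter> set R = {}"
  using shift_notin_R by (auto simp: set_S')

lemma S'_S_disjoint: "set S' \<inter> set S = {}"
  using shift_notin_S by (auto simp: set_S')

lemma distinct_S': "distinct S'"
  unfolding S'_def using distinct_S inj_shift by (simp add: distinct_map inj_on_def inj_def)

lemma diagram_Pmor: "diagram \<in> Pmor"
proof -
  have skew: "skew_on (R @ S') Mstate" "skew_on (S' @ S) Mcap"
    using S'_R_disjoint S'_S_disjoint by (auto simp: skew_on_def Mstate_def Mcap_def)
  have distinct: "distinct (S' @ S)" "distinct (R @ S')"
    using distinct_R distinct_S distinct_S' S'_R_disjoint S'_S_disjoint by auto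
  have "tensor (idm R) (sPfv (S' @ S) Mcap) \<in> Pmor"
    by (rule Pmor.tens[OF Pmor.ident[OF distinct_R] Pmor.genPfv[OF distinct(1) skew(2)]])
      (use R_S_disjoint S'_R_disjoint in \<open>auto simp: idm_def sPfv_def\<close>)
  moreover have "tensor (sPf (R @ S') Mstate) (idm S) \<in> Pmor"
    by (rule Pmor.tens[OF Pmor.genPf[OF distinct(2) skew(1)] Pmor.ident[OF distinct_S]])
      (use R_S_disjoint S'_S_disjoint in \<open>auto simp: idm_def sPf_def\<close>)
  ultimately show ?thesis
    unfolding diagram_def by (rule Pmor.compose) (simp add: tensor_def idm_def sPf_def sPfv_def)
qed

lemma Mstate_shift: "r \<in> set R \<Longrightarrow> s \<in> set S \<Longrightarrow> Mstate r (shift s) = x * X r s"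
  by (simp add: Mstate_def set_S' shift_def)

lemma Mcap_shift: "a \<in> set S \<Longrightarrow> b \<in> set S \<Longrightarrow> Mcap (shift a) b = (if a = b then c else 0)"
  using inj_eq[OF inj_shift] by (simp add: Mcap_def set_S')

lemma pfsub_Mstate:
  assumes I: "I \<subseteq> set R" and J: "J \<subseteq> set S"
  shows "pfsub Mstate (sublab (R @ S') (I \<union> shift ` J))
    = interleave_sign (length (sublab R I)) * x ^ length (sublab R I) * detsub X (sublab R I) (sublab S J)"
proof -
  let ?rs = "sublab R I" and ?cs = "sublab S J"
  have "sublab R (I \<union> shift ` J) = ?rs"
    by (rule sublab_cong) (use shift_notin_R in auto)
  moreover have "sublab S' (I \<union> shift ` J) = map shift ?cs"
    unfolding S'_def sublab_map
    by (rule arg_cong[where f = "map shift"], rule sublab_cong)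
      (use I shift_notin_R inj_eq[OF inj_shift] in auto)
  ultimately have split: "sublab (R @ S') (I \<union> shift ` J) = ?rs @ map shift ?cs"
    by (simp add: sublab_append)
  have rs: "set ?rs \<subseteq> set R" and cs: "set ?cs \<subseteq> set S"
    by (auto simp: set_sublab)
  have mat_eq: "mat n n (\<lambda>(i, j). Mstate (?rs ! i) (map shift ?cs ! j)) = x \<cdot>\<^sub>m mat n n (\<lambda>(i, j). X (?rs ! i) (?cs ! j))"
    if "length ?rs = n" "length ?cs = n" for n
    using that by (intro eq_matI) (auto simp: Mstate_shift subsetD[OF rs] subsetD[OF cs])
  have pf: "pfsub Mstate (?rs @ map shift ?cs) = (if length ?rs = length (map shift ?cs)
      then interleave_sign (length ?rs)
        * det (mat (length ?rs) (length ?rs) (\<lambda>(i, j). Mstate (?rs ! i) (map shift ?cs ! j)))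
      else 0)"
    by (rule pfsub_append_block) (use rs cs S'_R_disjoint in \<open>auto simp: Mstate_def set_S'\<close>)
  show ?thesis
  proof (cases "length ?rs = length ?cs")
    case True
    show ?thesis
      unfolding split pf mat_eq[OF refl True[symmetric]] detsub_def using True by simp
  qed (simp add: split pf detsub_def)
qed

lemma pfsub_Mcap:
  assumes KS: "K \<inter> set S = J"
  shows "pfsub Mcap (sublab (S' @ S) (- K)) = (if \<forall>y\<in>set S. shift y \<in> K \<longleftrightarrow> y \<in> J
    then interleave_sign (length (sublab S (- J))) * c ^ length (sublab S (- J)) else 0)"
proof -
  let ?K = "{y. shift y \<in> - K}"
  let ?a = "sublab S ?K" and ?b = "sublab S (- J)"
  have "sublab S (- K) = ?b"
    by (rule sublab_cong) (use KS in auto)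
  then have split: "sublab (S' @ S) (- K) = map shift ?a @ ?b"
    unfolding sublab_append S'_def sublab_map by simp
  have a: "set ?a \<subseteq> set S" and b: "set ?b \<subseteq> set S"
    by (auto simp: set_sublab)
  have cond: "(?K \<inter> set S = - J \<inter> set S) \<longleftrightarrow> (\<forall>y\<in>set S. shift y \<in> K \<longleftrightarrow> y \<in> J)"
    by auto
  have mat_eq: "mat n n (\<lambda>(i, j). Mcap (map shift ?a ! i) (?b ! j)) = mat n n (\<lambda>(i, j). if ?a ! i = ?b ! j then c else 0)"
    if "length ?a = n" "length ?b = n" for n
    using that by (intro eq_matI) (auto simp: Mcap_shift subsetD[OF a] subsetD[OF b])
  have pf: "pfsub Mcap (map shift ?a @ ?b) = (if length (map shift ?a) = length ?b
      then interleave_sign (length (map shift ?a))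
        * det (mat (length (map shift ?a)) (length (map shift ?a)) (\<lambda>(i, j). Mcap (map shift ?a ! i) (?b ! j)))
      else 0)"
    by (rule pfsub_append_block) (use a b S'_S_disjoint shift_notin_S in \<open>auto simp: Mcap_def set_S'\<close>)
  have det: "det (mat (length ?a) (length ?a) (\<lambda>(i, j). if ?a ! i = ?b ! j then c else 0))
      = (if ?K \<inter> set S = - J \<inter> set S then c ^ length ?a else 0)" if "length ?a = length ?b"
    by (rule det_sublab_match[OF distinct_S refl that[symmetric]])
  show ?thesis
    unfolding split cond[symmetric]
  proof (cases "length ?a = length ?b")
    case True
    then show "pfsub Mcap (map shift ?a @ ?b) = (if ?K \<inter> set S = - J \<inter> set S
        then interleave_sign (length ?b) * c ^ length ?b else 0)"
      unfolding pf length_map mat_eq[OF refl True[symmetric]] det[OF True] using True by simp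
  next
    case False
    then have "?K \<inter> set S \<noteq> - J \<inter> set S" using sublab_cong by metis
    then show "pfsub Mcap (map shift ?a @ ?b) = (if ?K \<inter> set S = - J \<inter> set S
        then interleave_sign (length ?b) * c ^ length ?b else 0)"
      unfolding pf using False by simp
  qed
qed


lemma coef_diagram:
  "coef diagram I J = (\<Sum>K\<in>Pow (set (R @ S' @ S)).
     (if I \<subseteq> set R \<and> K \<inter> set R = I then pfsub Mcap (sublab (S' @ S) (- K)) else 0)
   * (if J \<subseteq> set S \<and> K \<inter> set S = J then pfsub Mstate (sublab (R @ S') K) else 0))"
proof -
  have sublab: "sublab (S' @ S) (- (K \<inter> set (S' @ S))) = sublab (S' @ S) (- K)"
    "sublab (R @ S') (K \<inter> set (R @ S')) = sublab (R @ S') K" for K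
    by (auto intro: sublab_cong)
  show ?thesis
    unfolding diagram_def comp_def tensor_def idm_def sPfv_def sPf_def tmor.select_convs
    unfolding sublab
    by (intro sum.cong) auto
qed

lemma intermediate_labels_iff:
  assumes K: "K \<subseteq> set R \<union> set S' \<union> set S" and I: "I \<subseteq> set R" and J: "J \<subseteq> set S"
  shows "(K \<inter> set R = I \<and> K \<inter> set S = J \<and> (\<forall>y\<in>set S. shift y \<in> K \<longleftrightarrow> y \<in> J))
    \<longleftrightarrow> K = I \<union> shift ` J \<union> J"
  using assms R_S_disjoint shift_notin_R shift_notin_S inj_eq[OF inj_shift] by (auto simp: set_S')

lemma diagram_summand:
  assumes K: "K \<subseteq> set (R @ S' @ S)" and I: "I \<subseteq> set R" and J: "J \<subseteq> set S"
  shows "(if I \<subseteq> set R \<and> K \<inter> set R = I then pfsub Mcap (sublab (S' @ S) (- K)) else 0)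
    * (if J \<subseteq> set S \<and> K \<inter> set S = J then pfsub Mstate (sublab (R @ S') K) else 0)
    = (if K = I \<union> shift ` J \<union> J
       then interleave_sign (length (sublab S (- J))) * c ^ length (sublab S (- J))
         * (interleave_sign (length (sublab R I)) * x ^ length (sublab R I)
            * detsub X (sublab R I) (sublab S J))
       else 0)" (is "?lhs = ?rhs")
proof (cases "K \<inter> set R = I \<and> K \<inter> set S = J")
  case True
  have K': "K \<subseteq> set R \<union> set S' \<union> set S" using K by auto
  have iff: "(\<forall>y\<in>set S. shift y \<in> K \<longleftrightarrow> y \<in> J) \<longleftrightarrow> K = I \<union> shift ` J \<union> J"
    using intermediate_labels_iff[OF K' I J] True by simp
  have cap: "pfsub Mcap (sublab (S' @ S) (- K)) = (if \<forall>y\<in>set S. shift y \<in> K \<longleftrightarrow> y \<in> J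
      then interleave_sign (length (sublab S (- J))) * c ^ length (sublab S (- J)) else 0)"
    by (rule pfsub_Mcap) (use True in simp)
  have "?lhs = pfsub Mcap (sublab (S' @ S) (- K)) * pfsub Mstate (sublab (R @ S') K)"
    using True I J by simp
  also have "\<dots> = ?rhs"
  proof (cases "K = I \<union> shift ` J \<union> J")
    case K0: True
    have "sublab (R @ S') K = sublab (R @ S') (I \<union> shift ` J)"
      by (rule sublab_cong) (use K0 R_S_disjoint J S'_S_disjoint in \<open>auto simp: set_S'\<close>)
    then show ?thesis
      using K0 cap iff pfsub_Mstate[OF I J] by simp
  next
    case False
    then show ?thesis
      using cap iff by simp
  qed
  finally show ?thesis .
next
  case False
  have "(I \<union> shift ` J \<union> J) \<inter> set R = I" "(I \<union> shift ` J \<union> J) \<inter> set S = J"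
    using I J R_S_disjoint shift_notin_R shift_notin_S by auto
  then have "K \<noteq> I \<union> shift ` J \<union> J"
    using False by auto
  then show ?thesis
    using False by simp
qed

lemma coef_diagram_inside:
  assumes I: "I \<subseteq> set R" and J: "J \<subseteq> set S"
  shows "coef diagram I J = interleave_sign (length (sublab S (- J))) * c ^ length (sublab S (- J))
    * (interleave_sign (length (sublab R I)) * x ^ length (sublab R I) * detsub X (sublab R I) (sublab S J))"
proof -
  have "coef diagram I J = (\<Sum>K\<in>Pow (set (R @ S' @ S)). if K = I \<union> shift ` J \<union> J
      then interleave_sign (length (sublab S (- J))) * c ^ length (sublab S (- J))
        * (interleave_sign (length (sublab R I)) * x ^ length (sublab R I)
           * detsub X (sublab R I) (sublab S J))
      else 0)"
    unfolding coef_diagram by (rule sum.cong[OF refl]) (rule diagram_summand[OF _ I J], simp)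
  moreover have "I \<union> shift ` J \<union> J \<in> Pow (set (R @ S' @ S))"
    using I J by (auto simp: set_S')
  ultimately show ?thesis by simp
qed

lemma diagram_eq_sDet: "diagram = sDet R S X"
proof (rule tmor.equality)
  show "coef diagram = coef (sDet R S X)"
  proof (intro ext)
    fix I J
    show "coef diagram I J = coef (sDet R S X) I J"
    proof (cases "I \<subseteq> set R \<and> J \<subseteq> set S")
      case True
      let ?p = "length (sublab R I)" and ?q = "length (sublab S J)"
      have "?q \<le> length S" by (simp add: sublab_def)
      then have "interleave_sign (length S - ?q) * c ^ (length S - ?q) * (interleave_sign ?q * x ^ ?q) = 1"
        using scalars_cancel by blast
      then show ?thesis
        using True by (cases "?p = ?q")
          (simp_all add: coef_diagram_inside sDet_def detsub_def length_sublab_Compl mult.assoc[symmetric])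
    next
      case False
      then show ?thesis
        unfolding coef_diagram by (auto simp: sDet_def intro!: sum.neutral)
    qed
  qed
qed (simp_all add: diagram_def comp_def tensor_def idm_def sPfv_def sPf_def sDet_def)

end

section \<open>Every \<open>sDet\<close> lies in \<open>\<P>\<close>\<close>

lemma exists_root_interleave_sign: "\<exists>c::complex. c ^ n = interleave_sign n"
proof (cases "interleave_sign n = 1")
  case False
  then have "interleave_sign n = -1"
    using interleave_sign_square[of n] by (metis minus_equation_iff square_eq_1_iff)
  moreover have "n \<noteq> 0" using False by (cases n) auto
  ultimately have "cis (pi / real n) ^ n = interleave_sign n"
    by (simp add: DeMoivre)
  then show ?thesis by blast
qed (intro exI[of _ 1], simp)

lemma interleave_sign_scalars_cancel:
  assumes c: "c ^ n = interleave_sign n" and p: "p \<le> n"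
  shows "interleave_sign (n - p) * c ^ (n - p) * (interleave_sign p * (c * (-1) ^ (n + 1)) ^ p) = 1"
proof -
  have "interleave_sign n = interleave_sign p * interleave_sign (n - p) * (-1) ^ (p * (n - p))"
    using interleave_sign_add[of p "n - p"] p by simp
  then have sg: "interleave_sign p * interleave_sign (n - p) = interleave_sign n * (-1) ^ (p * (n - p))"
    by (simp add: power_add[symmetric] algebra_simps)
  have "(c * (-1) ^ (n + 1)) ^ p = c ^ p * (-1) ^ ((n + 1) * p)"
    by (simp only: power_mult_distrib power_mult)
  moreover have "c ^ p * c ^ (n - p) = c ^ n"
    using p by (simp add: power_add[symmetric])
  ultimately have pw: "c ^ (n - p) * (c * (-1) ^ (n + 1)) ^ p = c ^ n * (-1) ^ ((n + 1) * p)"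
    by (metis mult.assoc mult.commute)
  have "even (p * (n - p) + (n + 1) * p)"
  proof (cases "even p")
    case False
    have "p * (n - p) + (n + 1) * p = p * (n - p + n + 1)" by (simp add: algebra_simps)
    moreover have "even (n - p + n + 1)" using False p by presburger
    ultimately show ?thesis by (metis even_mult_iff)
  qed simp
  then have parity: "(-1::complex) ^ (p * (n - p)) * (-1) ^ ((n + 1) * p) = 1"
    by (simp add: power_add[symmetric])
  have "interleave_sign (n - p) * c ^ (n - p) * (interleave_sign p * (c * (-1) ^ (n + 1)) ^ p)
      = (interleave_sign p * interleave_sign (n - p)) * (c ^ (n - p) * (c * (-1) ^ (n + 1)) ^ p)"
    by (simp only: mult_ac)
  also have "\<dots> = interleave_sign n * c ^ n * ((-1) ^ (p * (n - p)) * (-1) ^ ((n + 1) * p))"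
    unfolding sg pw by (simp only: mult_ac)
  also have "\<dots> = 1"
    using parity c interleave_sign_square by simp
  finally show ?thesis .
qed

lemma sDet_disjoint_Pmor:
  assumes "distinct R" "distinct S" "set R \<inter> set S = {}"
  shows "sDet R S X \<in> Pmor"
proof -
  define m where "m = Suc (Max (insert 0 (set R \<union> set S)))"
  have "\<forall>a\<in>set R. a < m" "\<forall>a\<in>set S. a < m"
    by (auto simp: m_def less_Suc_eq_le)
  moreover obtain c :: complex where "c ^ length S = interleave_sign (length S)"
    using exists_root_interleave_sign by blast
  ultimately interpret pfaffian_factorization R S X m "c * (-1) ^ (length S + 1)" c
    using assms interleave_sign_scalars_cancel by unfold_locales auto
  show ?thesis
    using diagram_Pmor diagram_eq_sDet by simp
qed

lemma detsub_map_rows: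
  assumes "\<And>a. Y (g a) = X a"
  shows "detsub Y (map g rs) cs = detsub X rs cs"
  using assms by (auto simp: detsub_def intro!: arg_cong[where f = det] eq_matI)

lemma sublab_map_image:
  assumes "inj g"
  shows "sublab (map g R) (g ` I) = map g (sublab R I)"
  unfolding sublab_map using assms by (auto simp: inj_eq intro: arg_cong[where f = "map g"] sublab_cong)

lemma detsub_relabelling:
  assumes R: "distinct R" and g: "inj g" and I: "I \<subseteq> set R" and K: "K \<subseteq> set (map g R)"
  shows "detsub (\<lambda>u v. if v = g u then 1 else 0) (sublab R I) (sublab (map g R) K)
    = (if K = g ` I then 1 else 0)"
proof (cases "length (sublab R I) = length (sublab (map g R) K)")
  case True
  let ?rs = "sublab R I" and ?cs = "sublab (map g R) K"
  obtain n where n: "length ?rs = n" "length ?cs = n"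
    using True by blast
  have "mat n n (\<lambda>(i, j). if ?cs ! j = g (?rs ! i) then 1 else 0)
      = mat n n (\<lambda>(i, j). if sublab (map g R) (g ` I) ! i = ?cs ! j then 1 else (0 :: complex))"
    using n by (intro eq_matI) (auto simp: sublab_map_image[OF g])
  moreover have "det (mat n n (\<lambda>(i, j). if sublab (map g R) (g ` I) ! i = ?cs ! j then 1 else 0))
      = (if g ` I \<inter> set (map g R) = K \<inter> set (map g R) then 1 ^ n else (0 :: complex))"
    using R g n by (intro det_sublab_match) (auto simp: sublab_map_image distinct_map inj_on_def inj_def)
  moreover have "g ` I \<inter> set (map g R) = K \<inter> set (map g R) \<longleftrightarrow> K = g ` I"
    using I K by auto
  ultimately show ?thesis
    unfolding detsub_def n by simp
next
  case False
  then have "K \<noteq> g ` I"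
    using sublab_map_image[OF g, of R I] by auto
  then show ?thesis
    using False by (simp add: detsub_def)
qed

lemma sDet_comp_relabelling:
  assumes R: "distinct R" and g: "inj g"
  shows "comp (sDet R (map g R) (\<lambda>u v. if v = g u then 1 else 0)) (sDet (map g R) S (\<lambda>u. X (the_inv g u)))
    = sDet R S X" (is "comp ?P ?Q = _")
proof (rule tmor.equality)
  show "coef (comp ?P ?Q) = coef (sDet R S X)"
  proof (intro ext)
    fix I J
    show "coef (comp ?P ?Q) I J = coef (sDet R S X) I J"
    proof (cases "I \<subseteq> set R")
      case True
      have gI: "g ` I \<in> Pow (set (map g R))" using True by auto
      have "coef (comp ?P ?Q) I J = (\<Sum>K\<in>Pow (set (map g R)). if K = g ` I then coef ?Q (g ` I) J else 0)"
        unfolding comp_def tmor.select_convs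
        by (rule sum.cong) (use detsub_relabelling[OF R g True] True in \<open>auto simp: sDet_def\<close>)
      also have "\<dots> = coef ?Q (g ` I) J"
        using gI by simp
      also have "\<dots> = coef (sDet R S X) I J"
        using gI True the_inv_f_f[OF g]
        by (simp add: sDet_def sublab_map_image[OF g] detsub_map_rows)
      finally show ?thesis .
    qed (simp add: comp_def sDet_def)
  qed
qed (simp_all add: sDet_def comp_def)

lemma sDet_Pmor:
  assumes R: "distinct R" and S: "distinct S"
  shows "sDet R S X \<in> Pmor"
proof -
  obtain m where m: "\<forall>a\<in>set R \<union> set S. a < m"
    using finite_nat_set_iff_bounded[of "set R \<union> set S"] by auto
  define g where "g a = a + m" for a
  have g: "inj g" by (simp add: g_def inj_def)
  have fresh: "set R \<inter> set (map g R) = {}" "set (map g R) \<inter> set S = {}"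
    using m by (fastforce simp: g_def)+
  have "distinct (map g R)"
    using R g by (simp add: distinct_map inj_on_def inj_def)
  then have "comp (sDet R (map g R) (\<lambda>u v. if v = g u then 1 else 0)) (sDet (map g R) S (\<lambda>u. X (the_inv g u)))
      \<in> Pmor"
    using R S fresh by (intro Pmor.compose sDet_disjoint_Pmor) (auto simp: sDet_def)
  then show ?thesis
    by (simp add: sDet_comp_relabelling[OF R g])
qed

theorem mainTheorem13:
  shows "Dmor \<subseteq> Pmor"
proof
  fix f assume "f \<in> Dmor"
  then show "f \<in> Pmor"
  proof (induction rule: Dmor.induct)
    case (gen R S X)
    then show ?case by (rule sDet_Pmor)
  next
    case (ident A)
    then show ?case by (rule Pmor.ident)
  next
    case (compose f g)
    then show ?case by (blast intro: Pmor.compose)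
  next
    case (tens f g)
    then show ?case by (blast intro: Pmor.tens)
  qed
qed

end
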